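(* Let $\Delta\ge 1$ be an integer, $c>0$, $n\ge 0$, and let $s_1,\dots,s_\Delta$ be nonnegative numbers with $s_1 \le s_2 \le \dots \le s_\Delta$ and $\sum_{i=1}^{\Delta} s_i = n$. Then the quantity $\sum_{i=1}^{\Delta} (\Delta + i)\, c\sqrt{s_i}$, over all such tuples, is minimized when $s_\Delta = n$ (and hence $s_1=\dots=s_{\Delta-1}=0$). *)

theory Defs
  imports Complex_Main
begin

definition admissible :: "nat \<Rightarrow> real \<Rightarrow> (nat \<Rightarrow> real) \<Rightarrow> bool" where
  "admissible \<Delta> n s \<longleftrightarrow>
     (\<forall>i\<in>{1..\<Delta>}. s i \<ge> 0) \<and>
     (\<forall>i\<in>{1..<\<Delta>}. s i \<le> s (Suc i)) \<and>
     (\<Sum>i=1..\<Delta>. s i) = n"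

definition objective :: "nat \<Rightarrow> real \<Rightarrow> (nat \<Rightarrow> real) \<Rightarrow> real" where
  "objective \<Delta> c s = (\<Sum>i=1..\<Delta>. real (\<Delta> + i) * c * sqrt (s i))"

end

theory Submission
  imports Defs
begin

text \<open>Let \<open>M = s\<^sub>\<Delta>\<close> be the largest entry and \<open>R = n - M\<close>. Since \<open>s\<^sub>i \<le> M\<close>, every
  \<open>\<surd>s\<^sub>i\<close> is at least \<open>s\<^sub>i / \<surd>M\<close>, so the entries below the top contribute at least
  \<open>R / \<surd>M\<close> to \<open>\<Sum>\<^sub>i<\<^sub>\<Delta> \<surd>s\<^sub>i\<close>. Hence \<open>\<Sum>\<^sub>i<\<^sub>\<Delta> \<surd>s\<^sub>i + 2\<surd>M \<ge> (n + M)/\<surd>M \<ge> 2\<surd>n\<close> by AM-GM.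
  All weights \<open>\<Delta> + i\<close> are at least \<open>\<Delta>\<close>, and the top weight is exactly \<open>2\<Delta>\<close>, so the
  objective is at least \<open>2\<Delta>c\<surd>n\<close>, which is the value at \<open>s\<^sub>\<Delta> = n\<close>.\<close>

lemma le_last_if_Suc_mono:
  fixes s :: "nat \<Rightarrow> 'a::order"
  assumes mono: "\<forall>j\<in>{1..<D}. s j \<le> s (Suc j)" and "1 \<le> i" "i \<le> D"
  shows "s i \<le> s D"
  using \<open>i \<le> D\<close>
proof (induction rule: dec_induct)
  case base
  show ?case by simp
next
  case (step j)
  have "s j \<le> s (Suc j)" using mono \<open>1 \<le> i\<close> step.hyps by auto
  with step.IH show ?case by simp
qed

lemma div_sqrt_le_sqrt:
  fixes x M :: real
  assumes "0 \<le> x" "x \<le> M"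
  shows "x / sqrt M \<le> sqrt x"
proof (cases "x = 0")
  case False
  then have "x / sqrt M \<le> x / sqrt x"
    using assms by (intro divide_left_mono) (auto intro: real_sqrt_le_mono)
  also have "\<dots> = sqrt x" using assms(1) by (rule real_div_sqrt)
  finally show ?thesis .
qed simp

lemma two_sqrt_sum_le:
  fixes s :: "'a \<Rightarrow> real"
  assumes "finite A" "k \<in> A"
    and nonneg: "\<And>i. i \<in> A \<Longrightarrow> 0 \<le> s i" and le_top: "\<And>i. i \<in> A \<Longrightarrow> s i \<le> s k"
  shows "2 * sqrt (sum s A) \<le> (\<Sum>i\<in>A - {k}. sqrt (s i)) + 2 * sqrt (s k)"
proof -
  define M R where "M = s k" and "R = sum s (A - {k})"
  have sum_eq: "sum s A = R + M"
    unfolding M_def R_def using assms(1,2) by (simp add: sum.remove)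
  have R_le: "R / sqrt M \<le> (\<Sum>i\<in>A - {k}. sqrt (s i))"
    unfolding R_def M_def sum_divide_distrib
    by (intro sum_mono div_sqrt_le_sqrt) (auto intro: nonneg le_top)
  show ?thesis
  proof (cases "M = 0")
    case True
    then have "R = 0"
      unfolding R_def M_def using nonneg le_top by (intro sum.neutral) (auto intro: antisym)
    then show ?thesis using True sum_eq M_def by (auto intro!: sum_nonneg simp: nonneg)
  next
    case False
    then have sqrt_M: "sqrt M > 0" using nonneg[OF \<open>k \<in> A\<close>] M_def by auto
    have "R \<ge> 0" unfolding R_def by (auto intro!: sum_nonneg nonneg)
    then have "2 * (sqrt (R + M) * sqrt M) \<le> (R + M) + M"
      using arith_geo_mean_sqrt[of "R + M" M] sqrt_M by (simp add: real_sqrt_mult)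
    then have "2 * sqrt (R + M) \<le> ((R + M) + M) / sqrt M"
      using sqrt_M by (simp add: pos_le_divide_eq mult.commute)
    also have "\<dots> = R / sqrt M + 2 * sqrt M"
      using sqrt_M real_div_sqrt[of M] by (simp add: add_divide_distrib times_divide_eq_right[symmetric])
    finally show ?thesis using R_le unfolding sum_eq M_def by linarith
  qed
qed

lemma admissible_weighted_sqrt_sum_ge:
  assumes "1 \<le> D" and adm: "admissible D n s"
  shows "2 * real D * sqrt n \<le> (\<Sum>i=1..D. real (D + i) * sqrt (s i))"
proof -
  have nonneg: "\<And>i. i \<in> {1..D} \<Longrightarrow> 0 \<le> s i" and sum_eq: "sum s {1..D} = n"
    and mono: "\<forall>j\<in>{1..<D}. s j \<le> s (Suc j)"
    using adm unfolding admissible_def by auto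
  have split: "{1..D} = insert D {1..<D}" and rest: "{1..D} - {D} = {1..<D}"
    using \<open>1 \<le> D\<close> by auto
  have "2 * sqrt (sum s {1..D}) \<le> (\<Sum>i\<in>{1..D} - {D}. sqrt (s i)) + 2 * sqrt (s D)"
    using nonneg le_last_if_Suc_mono[OF mono] \<open>1 \<le> D\<close> by (intro two_sqrt_sum_le) auto
  then have "2 * sqrt n \<le> (\<Sum>i=1..<D. sqrt (s i)) + 2 * sqrt (s D)"
    unfolding sum_eq rest .
  then have "real D * (2 * sqrt n) \<le> real D * ((\<Sum>i=1..<D. sqrt (s i)) + 2 * sqrt (s D))"
    by (rule mult_left_mono) simp
  then have "2 * real D * sqrt n \<le> (\<Sum>i=1..<D. real D * sqrt (s i)) + 2 * real D * sqrt (s D)"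
    by (simp add: sum_distrib_left algebra_simps)
  also have "(\<Sum>i=1..<D. real D * sqrt (s i)) \<le> (\<Sum>i=1..<D. real (D + i) * sqrt (s i))"
    using nonneg by (intro sum_mono mult_right_mono) auto
  also have "\<dots> + 2 * real D * sqrt (s D) = (\<Sum>i=1..D. real (D + i) * sqrt (s i))"
    unfolding split by (simp add: algebra_simps)
  finally show ?thesis by simp
qed

theorem mainTheorem2:
  fixes \<Delta> :: nat and c n :: real
  assumes "\<Delta> \<ge> 1" and "c > 0" and "n \<ge> 0"
  defines "s0 \<equiv> (\<lambda>i::nat. if i = \<Delta> then n else 0)"
  shows "admissible \<Delta> n s0 \<and>
         (\<forall>s. admissible \<Delta> n s \<longrightarrow> objective \<Delta> c s0 \<le> objective \<Delta> c s)"
proof -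
  have split: "{1..\<Delta>} = insert \<Delta> {1..<\<Delta>}" using assms(1) by auto
  have "admissible \<Delta> n s0"
    unfolding admissible_def s0_def using assms(1,3) by (auto simp: split)
  moreover have "objective \<Delta> c s0 = c * (2 * real \<Delta> * sqrt n)"
    unfolding objective_def s0_def split by simp
  moreover have "objective \<Delta> c s = c * (\<Sum>i=1..\<Delta>. real (\<Delta> + i) * sqrt (s i))" for s
    unfolding objective_def by (simp add: sum_distrib_left algebra_simps)
  ultimately show ?thesis
    using admissible_weighted_sqrt_sum_ge[OF assms(1)] assms(2) by (simp add: mult_left_mono)
qed

end
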